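(* Suppose $\sigma_x=\sigma_y$ and $\rho\in(0,1)$. Then $(\mathbf a^*,\mathbf b^* )$ is a global pure equilibrium: $K(\mathbf a^*,\mathbf b)\le K(\mathbf a^*,\mathbf b^* )=0\le K(\mathbf a,\mathbf b^* )$ for all $\mathbf a,\mathbf b\in\mathbb R^2$.
   Context: Standing setup. Fix $\sigma_x,\sigma_y>0$ and $\rho\in(-1,1)$, and let $(\xi,\eta)$ be a bivariate normal random vector with mean $(0,0)$ and covariance matrix $\Sigma=\begin{pmatrix}\sigma_x^2&\rho\sigma_x\sigma_y\\ \rho\sigma_x\sigma_y&\sigma_y^2\end{pmatrix}$. Player I (the minimizer) chooses $\mathbf a=(x_1,y_1)\in\mathbb R^2$ and Player II (the maximizer) chooses $\mathbf b=(x_2,y_2)\in\mathbb R^2$. Let $C_1(\mathbf a,\mathbf b)=\{(x,y):(x_1-x)^2+(y_1-y)^2<(x_2-x)^2+(y_2-y)^2\}$ and $C_2(\mathbf a,\mathbf b)=\{(x,y):(x_1-x)^2+(y_1-y)^2>(x_2-x)^2+(y_2-y)^2\}$. The payoff to Player II (paid by Player I) is $K(\mathbf a,\mathbf b)=x_1+y_1$ if $\mathbf a=\mathbf b$, and $K(\mathbf a,\mathbf b)=(x_1+y_1)\,P((\xi,\eta)\in C_1(\mathbf a,\mathbf b))+(x_2+y_2)\,P((\xi,\eta)\in C_2(\mathbf a,\mathbf b))$ if $\mathbf a\neq\mathbf b$. For $\mathbf a=(x,y)$ write $-\mathbf a=(-x,-y)$. Let $x_2^*=\frac{\sqrt{2\pi(\sigma_x^2+2\rho\sigma_x\sigma_y+\sigma_y^2)}}{4}$,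 $\mathbf b^*=(x_2^*,x_2^* )$ and $\mathbf a^*=(-x_2^*,-x_2^* )$. *)

theory Defs
  imports "HOL-Probability.Probability"
begin

text \<open>Density of the centred bivariate normal law with standard deviations
  sx, sy and correlation r (requires sx, sy > 0, -1 < r < 1).\<close>
definition bvn_pdf :: "real \<Rightarrow> real \<Rightarrow> real \<Rightarrow> real \<times> real \<Rightarrow> real" where
  "bvn_pdf sx sy r p =
     (let x = fst p; y = snd p in
       exp (- (x\<^sup>2 / sx\<^sup>2 - 2 * r * x * y / (sx * sy) + y\<^sup>2 / sy\<^sup>2) / (2 * (1 - r\<^sup>2)))
       / (2 * pi * sx * sy * sqrt (1 - r\<^sup>2)))"

definition bvn :: "real \<Rightarrow> real \<Rightarrow> real \<Rightarrow> (real \<times> real) measure" where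
  "bvn sx sy r = density lborel (\<lambda>p. ennreal (bvn_pdf sx sy r p))"

definition cellC1 :: "real \<times> real \<Rightarrow> real \<times> real \<Rightarrow> (real \<times> real) set" where
  "cellC1 a b = {(x, y). (fst a - x)\<^sup>2 + (snd a - y)\<^sup>2 < (fst b - x)\<^sup>2 + (snd b - y)\<^sup>2}"

definition cellC2 :: "real \<times> real \<Rightarrow> real \<times> real \<Rightarrow> (real \<times> real) set" where
  "cellC2 a b = {(x, y). (fst a - x)\<^sup>2 + (snd a - y)\<^sup>2 > (fst b - x)\<^sup>2 + (snd b - y)\<^sup>2}"

text \<open>Payoff K(a,b) to Player II.\<close>
definition payoffK :: "real \<Rightarrow> real \<Rightarrow> real \<Rightarrow> real \<times> real \<Rightarrow> real \<times> real \<Rightarrow> real" where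
  "payoffK sx sy r a b =
     (if a = b then fst a + snd a
      else (fst a + snd a) * measure (bvn sx sy r) (cellC1 a b)
         + (fst b + snd b) * measure (bvn sx sy r) (cellC2 a b))"

definition xstar :: "real \<Rightarrow> real \<Rightarrow> real \<Rightarrow> real" where
  "xstar sx sy r = sqrt (2 * pi * (sx\<^sup>2 + 2 * r * sx * sy + sy\<^sup>2)) / 4"

end

theory Submission
  imports Defs
begin

text \<open>A Voronoi cell of the two players' points is a half-plane \<open>{\<alpha> x + \<beta> y > d}\<close>, whose
  probability is \<open>Q(d / \<tau>)\<close>, where \<open>Q\<close> is the standard normal tail and \<open>\<tau>\<close> the standard
  deviation of \<open>\<alpha> \<xi> + \<beta> \<eta>\<close>. Against \<open>a* = (-c, -c)\<close> the payoff of \<open>b\<close> is therefore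
  \<open>-2c + (\<alpha> + \<beta>) Q(z) / 2\<close>. Everything rests on the estimate
  \<open>(z + \<surd>(\<pi>/2)) Q(z) \<le> \<surd>(\<pi>/2) / 2\<close>, i.e. \<open>Q\<close> lies below the hyperbola tangent to it at \<open>0\<close>,
  which follows by monotonicity from the Chernoff bound \<open>Q(z) \<le> exp(-z\<^sup>2/2) / 2\<close>.
  For \<open>\<sigma>\<^sub>x = \<sigma>\<^sub>y\<close> and \<open>0 \<le> \<rho> < 1\<close> the deviation \<open>\<tau>\<close> compares with that of \<open>\<xi> + \<eta>\<close> in the direction
  required by the sign of \<open>z\<close>, and \<open>c = \<surd>(\<pi>/2) sd(\<xi> + \<eta>) / 2\<close> is exactly what makes the payoff
  nonpositive. The minimiser's inequality follows, because the law of \<open>(\<xi>, \<eta>)\<close> and the game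
  are symmetric under \<open>p \<mapsto> -p\<close> and under exchanging the players.\<close>

section \<open>The standard normal tail\<close>

abbreviation std_normal :: "real measure" where
  "std_normal \<equiv> density lborel (\<lambda>x. ennreal (std_normal_density x))"

definition normal_tail :: "real \<Rightarrow> real" where
  "normal_tail z = measure std_normal {z<..}"

interpretation std_normal: prob_space std_normal
  using prob_space_normal_density[of 1 0] by simp

lemma emeasure_std_normal:
  "A \<in> sets borel \<Longrightarrow>
     emeasure std_normal A = (\<integral>\<^sup>+x. indicator A x * ennreal (std_normal_density x) \<partial>lborel)"
  by (subst emeasure_density) (auto intro!: nn_integral_cong simp: mult.commute)

lemma emeasure_std_normal_greaterThan: "emeasure std_normal {z<..} = ennreal (normal_tail z)"
  unfolding normal_tail_def by (rule std_normal.emeasure_eq_measure)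

lemma normal_tail_nonneg: "0 \<le> normal_tail z"
  unfolding normal_tail_def by simp

lemma emeasure_std_normal_atMost: "emeasure std_normal {..z} = emeasure std_normal {-z<..}"
proof -
  have "emeasure std_normal {..z} = (\<integral>\<^sup>+x. indicator {..z} x * ennreal (std_normal_density x) \<partial>lborel)"
    by (simp add: emeasure_std_normal)
  also have "\<dots> = ennreal \<bar>-1\<bar> * (\<integral>\<^sup>+x. indicator {..z} (0 + -1 * x)
                    * ennreal (std_normal_density (0 + -1 * x)) \<partial>lborel)"
    by (rule nn_integral_real_affine) auto
  also have "\<dots> = (\<integral>\<^sup>+x. indicator {-z..} x * ennreal (std_normal_density x) \<partial>lborel)"
    by (auto intro!: nn_integral_cong simp: std_normal_density_def indicator_def)
  also have "\<dots> = (\<integral>\<^sup>+x. indicator {-z<..} x * ennreal (std_normal_density x) \<partial>lborel)"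
    by (rule nn_integral_cong_AE, use AE_lborel_singleton[of "-z"] in eventually_elim)
       (auto simp: indicator_def)
  finally show ?thesis
    by (simp add: emeasure_std_normal)
qed

lemma normal_tail_uminus: "normal_tail (- z) = 1 - normal_tail z"
proof -
  have "measure std_normal {..z} = measure std_normal {-z<..}"
    using emeasure_std_normal_atMost[of z] by (simp add: measure_def)
  moreover have "{..z} = space std_normal - {z<..}"
    by auto
  ultimately show ?thesis
    unfolding normal_tail_def using std_normal.prob_compl[of "{z<..}"] by simp
qed

lemma normal_tail_0: "normal_tail 0 = 1 / 2"
  using normal_tail_uminus[of 0] by simp

lemma normal_tail_le_exp:
  assumes "0 \<le> z"
  shows "normal_tail z \<le> exp (- z\<^sup>2 / 2) / 2"
proof -
  have shift: "indicator {z<..} (z + 1 * x) * ennreal (std_normal_density (z + 1 * x))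
        \<le> ennreal (exp (- z\<^sup>2 / 2)) * (indicator {0<..} x * ennreal (std_normal_density x))" for x
  proof (cases "0 < x")
    case True
    have "exp (- (z + x)\<^sup>2 / 2) \<le> exp (- z\<^sup>2 / 2) * exp (- x\<^sup>2 / 2)"
      unfolding exp_add[symmetric] using True assms by (simp add: power2_eq_square field_simps)
    then have "std_normal_density (z + x) \<le> exp (- z\<^sup>2 / 2) * std_normal_density x"
      by (simp add: std_normal_density_def divide_right_mono)
    then show ?thesis
      using True by (simp add: ennreal_mult'[symmetric] ennreal_leI)
  qed (simp add: indicator_def)
  have "ennreal (normal_tail z) = (\<integral>\<^sup>+x. indicator {z<..} x * ennreal (std_normal_density x) \<partial>lborel)"
    by (simp add: emeasure_std_normal emeasure_std_normal_greaterThan[symmetric])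
  also have "\<dots> = ennreal \<bar>1\<bar> * (\<integral>\<^sup>+x. indicator {z<..} (z + 1 * x)
                    * ennreal (std_normal_density (z + 1 * x)) \<partial>lborel)"
    by (rule nn_integral_real_affine) auto
  also have "\<dots> \<le> (\<integral>\<^sup>+x. ennreal (exp (- z\<^sup>2 / 2))
                    * (indicator {0<..} x * ennreal (std_normal_density x)) \<partial>lborel)"
    using shift by (simp add: nn_integral_mono)
  also have "\<dots> = ennreal (exp (- z\<^sup>2 / 2)) * ennreal (normal_tail 0)"
    by (subst nn_integral_cmult)
       (auto simp: emeasure_std_normal emeasure_std_normal_greaterThan[symmetric])
  also have "\<dots> = ennreal (exp (- z\<^sup>2 / 2) / 2)"
    by (subst ennreal_mult[symmetric]) (auto simp: normal_tail_0)
  finally show ?thesis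
    by simp
qed

lemma continuous_on_std_normal_density: "continuous_on S std_normal_density"
  unfolding std_normal_density_def by (intro continuous_intros) auto

lemma measure_std_normal_greaterThanAtMost:
  assumes "a \<le> b"
  shows "measure std_normal {a<..b} = integral {a..b} std_normal_density"
proof -
  have integrable: "std_normal_density integrable_on {a..b}"
    by (intro integrable_continuous_interval continuous_on_std_normal_density)
  have has_int: "((\<lambda>x. indicator {a..b} x * std_normal_density x)
          has_integral integral {a..b} std_normal_density) UNIV"
  proof -
    have "(\<lambda>x. indicator {a..b} x * std_normal_density x)
            = (\<lambda>x. if x \<in> {a..b} then std_normal_density x else 0)"
      by (auto simp: indicator_def)
    then show ?thesis
      using integrable_integral[OF integrable] by (simp only: has_integral_restrict_UNIV)
  qed
  have "(\<integral>\<^sup>+x. ennreal (indicator {a..b} x * std_normal_density x) \<partial>lborel)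
          = ennreal (integral {a..b} std_normal_density)"
    by (rule nn_integral_has_integral_lborel[OF _ _ has_int]) auto
  moreover have "emeasure std_normal {a<..b}
                   = (\<integral>\<^sup>+x. ennreal (indicator {a..b} x * std_normal_density x) \<partial>lborel)"
    by (simp add: emeasure_std_normal, rule nn_integral_cong_AE,
        use AE_lborel_singleton[of a] in eventually_elim) (auto simp: indicator_def)
  ultimately show ?thesis
    using integrable by (simp add: measure_def integral_nonneg)
qed

lemma normal_tail_eq_half_minus_integral:
  assumes "0 \<le> z"
  shows "normal_tail z = 1 / 2 - integral {0..z} std_normal_density"
proof -
  have "measure std_normal ({0<..z} \<union> {z<..}) = measure std_normal {0<..z} + normal_tail z"
    unfolding normal_tail_def by (rule std_normal.finite_measure_Union) auto
  moreover have "{0<..z} \<union> {z<..} = {0<..}"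
    using assms by auto
  ultimately show ?thesis
    using measure_std_normal_greaterThanAtMost[OF assms] normal_tail_0
    unfolding normal_tail_def by simp
qed

lemma normal_tail_eq_half_plus_integral:
  assumes "z \<le> 0"
  shows "normal_tail z = 1 / 2 + integral {z..0} std_normal_density"
proof -
  have "measure std_normal ({z<..0} \<union> {0<..}) = measure std_normal {z<..0} + normal_tail 0"
    unfolding normal_tail_def by (rule std_normal.finite_measure_Union) auto
  moreover have "{z<..0} \<union> {0<..} = {z<..}"
    using assms by auto
  ultimately show ?thesis
    using measure_std_normal_greaterThanAtMost[OF assms] normal_tail_0
    unfolding normal_tail_def by simp
qed


lemma std_normal_density_eq: "std_normal_density x = exp (- x\<^sup>2 / 2) / (2 * sqrt (pi / 2))"
proof -
  have "sqrt (2 * pi) = 2 * sqrt (pi / 2)"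
    using real_sqrt_mult[of 4 "pi / 2"] by simp
  then show ?thesis
    by (simp add: std_normal_density_def)
qed

lemma normal_tail_hyperbola_bound_nonneg:
  assumes "0 \<le> z"
  shows "(z + sqrt (pi / 2)) * normal_tail z \<le> sqrt (pi / 2) / 2"
proof -
  define k where "k = sqrt (pi / 2)"
  define P where "P x = integral {0..x} std_normal_density" for x
  define u where "u x = (x + k) * P x - x / 2" for x
  have P': "(P has_real_derivative std_normal_density x) (at x within {0..z})"
    if "x \<in> {0..z}" for x
    unfolding P_def by (rule integral_has_real_derivative[OF continuous_on_std_normal_density that])
  have u': "(u has_real_derivative (P x + (x + k) * std_normal_density x - 1 / 2)) (at x within {0..z})"
    if "x \<in> {0..z}" for x
    unfolding u_def by (rule derivative_eq_intros P'[OF that] refl | simp)+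
  have "u 0 \<le> u z"
  proof (rule DERIV_nonneg_imp_increasing_open[OF assms])
    show "continuous_on {0..z} u"
      by (rule DERIV_continuous_on[OF u'])
    fix x assume x: "0 < x" "x < z"
    have "normal_tail x \<le> k * std_normal_density x"
      using normal_tail_le_exp[of x] x by (simp add: std_normal_density_eq k_def)
    moreover have "k * std_normal_density x \<le> (x + k) * std_normal_density x"
      using x by (intro mult_right_mono) auto
    moreover have "P x + (x + k) * std_normal_density x - 1 / 2
                     = (x + k) * std_normal_density x - normal_tail x"
      using normal_tail_eq_half_minus_integral[of x] x by (simp add: P_def)
    ultimately show "\<exists>y. DERIV u x :> y \<and> 0 \<le> y"
      using u'[of x] x by (auto simp: at_within_Icc_at)
  qed
  then have "z / 2 \<le> (z + k) * P z"
    by (simp add: u_def P_def)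
  moreover have "(z + k) * normal_tail z = (z + k) / 2 - (z + k) * P z"
    using normal_tail_eq_half_minus_integral[OF assms] by (simp add: P_def right_diff_distrib)
  ultimately show ?thesis
    unfolding k_def[symmetric] by (simp add: add_divide_distrib)
qed

lemma normal_tail_hyperbola_bound: "(z + sqrt (pi / 2)) * normal_tail z \<le> sqrt (pi / 2) / 2"
proof -
  define k where "k = sqrt (pi / 2)"
  have k: "0 < k"
    by (simp add: k_def)
  consider "0 \<le> z" | "z < 0" "z + k \<le> 0" | "z < 0" "0 < z + k"
    by linarith
  then show ?thesis
  proof cases
    case 1
    then show ?thesis
      by (rule normal_tail_hyperbola_bound_nonneg)
  next
    case 2
    have "(z + k) * normal_tail z \<le> 0"
      using 2 by (intro mult_nonpos_nonneg normal_tail_nonneg)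
    then show ?thesis
      using k unfolding k_def by linarith
  next
    case 3
    have "integral {z..0} std_normal_density \<le> integral {z..0} (\<lambda>_. 1 / (2 * k))"
      by (rule integral_le)
         (auto intro: integrable_continuous_interval continuous_on_std_normal_density
               simp: std_normal_density_eq k_def divide_le_cancel)
    then have "normal_tail z \<le> 1 / 2 - z / (2 * k)"
      using normal_tail_eq_half_plus_integral[of z] 3 by simp
    then have "(z + k) * normal_tail z \<le> (z + k) * (1 / 2 - z / (2 * k))"
      using 3 by (intro mult_left_mono) auto
    also have "\<dots> = k / 2 - z\<^sup>2 / (2 * k)"
      using k by (simp add: field_simps power2_eq_square)
    also have "\<dots> \<le> k / 2"
      using k by simp
    finally show ?thesis
      by (simp add: k_def)
  qed
qed

section \<open>Half-planes under the bivariate normal law\<close>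

lemma bvn_pdf_borel_measurable [measurable]: "bvn_pdf sx sy r \<in> borel_measurable borel"
proof -
  have "(\<lambda>p. exp (- ((fst p)\<^sup>2 / sx\<^sup>2 - 2 * r * fst p * snd p / (sx * sy) + (snd p)\<^sup>2 / sy\<^sup>2)
              / (2 * (1 - r\<^sup>2))) / (2 * pi * sx * sy * sqrt (1 - r\<^sup>2)))
          \<in> borel_measurable (borel \<Otimes>\<^sub>M borel)"
    by measurable
  then show ?thesis
    unfolding borel_prod by (simp add: bvn_pdf_def[abs_def] Let_def)
qed

lemma bvn_pdf_triangular_substitution:
  assumes "0 < sx" "0 < sy" "r\<^sup>2 < 1"
  shows "sx * (sy * sqrt (1 - r\<^sup>2)) * bvn_pdf sx sy r (sx * X, sy * (r * X + sqrt (1 - r\<^sup>2) * Y))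
           = std_normal_density X * std_normal_density Y"
proof -
  define s where "s = sqrt (1 - r\<^sup>2)"
  have s: "0 < s" "s\<^sup>2 = 1 - r\<^sup>2"
    using assms(3) by (simp_all add: s_def)
  have quadratic_form:
    "(sx * X)\<^sup>2 / sx\<^sup>2 - 2 * r * (sx * X) * (sy * (r * X + s * Y)) / (sx * sy)
       + (sy * (r * X + s * Y))\<^sup>2 / sy\<^sup>2 = (1 - r\<^sup>2) * (X\<^sup>2 + Y\<^sup>2)"
  proof -
    have "(sx * X)\<^sup>2 / sx\<^sup>2 - 2 * r * (sx * X) * (sy * (r * X + s * Y)) / (sx * sy)
            + (sy * (r * X + s * Y))\<^sup>2 / sy\<^sup>2 = X\<^sup>2 - 2 * r * X * (r * X + s * Y) + (r * X + s * Y)\<^sup>2"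
      using assms(1,2) by (simp add: power_mult_distrib)
    also have "\<dots> = (1 - r\<^sup>2) * (X\<^sup>2 + Y\<^sup>2)"
      using s(2) by algebra
    finally show ?thesis .
  qed
  have exponent: "- ((1 - r\<^sup>2) * (X\<^sup>2 + Y\<^sup>2)) / (2 * (1 - r\<^sup>2)) = - X\<^sup>2 / 2 + - Y\<^sup>2 / 2"
    using assms(3) by (simp add: divide_simps) (simp add: algebra_simps)
  have "bvn_pdf sx sy r (sx * X, sy * (r * X + s * Y))
          = exp (- X\<^sup>2 / 2) * exp (- Y\<^sup>2 / 2) / (2 * pi * sx * sy * s)"
    unfolding bvn_pdf_def Let_def fst_conv snd_conv quadratic_form exponent s_def[symmetric]
    by (simp only: exp_add)
  moreover have "std_normal_density X * std_normal_density Y = exp (- X\<^sup>2 / 2) * exp (- Y\<^sup>2 / 2) / (2 * pi)"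
    by (simp add: std_normal_density_def real_sqrt_mult[symmetric])
  ultimately show ?thesis
    using assms(1,2) s(1) by (simp add: s_def)
qed

lemma nn_integral_bvn_pdf:
  assumes "0 < sx" "0 < sy" "r\<^sup>2 < 1" and [measurable]: "f \<in> borel_measurable borel"
  shows "(\<integral>\<^sup>+p. f p * ennreal (bvn_pdf sx sy r p) \<partial>lborel) =
    (\<integral>\<^sup>+X. \<integral>\<^sup>+Y. f (sx * X, sy * (r * X + sqrt (1 - r\<^sup>2) * Y))
                   * ennreal (std_normal_density X * std_normal_density Y) \<partial>lborel \<partial>lborel)"
proof -
  define s where "s = sqrt (1 - r\<^sup>2)"
  have s: "0 < s"
    using assms(3) by (simp add: s_def)
  have "(\<integral>\<^sup>+p. f p * ennreal (bvn_pdf sx sy r p) \<partial>lborel)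
          = (\<integral>\<^sup>+x. \<integral>\<^sup>+y. f (x, y) * ennreal (bvn_pdf sx sy r (x, y)) \<partial>lborel \<partial>lborel)"
  proof (subst lborel_prod[symmetric], rule lborel.nn_integral_fst[symmetric])
    show "(\<lambda>p. f p * ennreal (bvn_pdf sx sy r p)) \<in> borel_measurable (lborel \<Otimes>\<^sub>M lborel)"
      unfolding lborel_prod by simp
  qed
  also have "\<dots> = (\<integral>\<^sup>+x. ennreal \<bar>sy * s\<bar> * \<integral>\<^sup>+Y. f (x, r * (sy / sx) * x + (sy * s) * Y)
                   * ennreal (bvn_pdf sx sy r (x, r * (sy / sx) * x + (sy * s) * Y)) \<partial>lborel \<partial>lborel)"
    by (rule nn_integral_cong, rule nn_integral_real_affine) (use assms s in auto)
  also have "\<dots> = ennreal \<bar>sx\<bar> * (\<integral>\<^sup>+X. ennreal \<bar>sy * s\<bar> *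
                   \<integral>\<^sup>+Y. f (0 + sx * X, r * (sy / sx) * (0 + sx * X) + (sy * s) * Y)
                     * ennreal (bvn_pdf sx sy r (0 + sx * X, r * (sy / sx) * (0 + sx * X) + (sy * s) * Y))
                   \<partial>lborel \<partial>lborel)"
    by (rule nn_integral_real_affine) (use assms in auto)
  also have "\<dots> = (\<integral>\<^sup>+X. \<integral>\<^sup>+Y. f (sx * X, sy * (r * X + s * Y))
                   * ennreal (sx * (sy * s) * bvn_pdf sx sy r (sx * X, sy * (r * X + s * Y))) \<partial>lborel \<partial>lborel)"
    using assms(1,2) s
    by (simp add: nn_integral_cmult[symmetric] ennreal_mult' algebra_simps abs_of_pos)
  also have "\<dots> = (\<integral>\<^sup>+X. \<integral>\<^sup>+Y. f (sx * X, sy * (r * X + s * Y))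
                   * ennreal (std_normal_density X * std_normal_density Y) \<partial>lborel \<partial>lborel)"
    using bvn_pdf_triangular_substitution[OF assms(1-3)] by (simp add: s_def)
  finally show ?thesis
    by (simp add: s_def)
qed

lemma normal_density_scale:
  assumes "c \<noteq> 0"
  shows "\<bar>c\<bar> * normal_density 0 \<bar>c\<bar> (c * X) = std_normal_density X"
proof -
  have "sqrt (2 * pi * \<bar>c\<bar>\<^sup>2) = sqrt (2 * pi) * \<bar>c\<bar>"
    by (simp add: real_sqrt_mult)
  moreover have "(c * X - 0)\<^sup>2 / (2 * \<bar>c\<bar>\<^sup>2) = X\<^sup>2 / 2"
    using assms by (simp add: field_simps)
  ultimately show ?thesis
    using assms unfolding normal_density_def by (simp add: power_mult_distrib)
qed

lemma nn_integral_std_normal_scale: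
  assumes "c \<noteq> 0" and [measurable]: "G \<in> borel_measurable borel"
  shows "(\<integral>\<^sup>+X. G (c * X) * ennreal (std_normal_density X) \<partial>lborel)
           = (\<integral>\<^sup>+u. G u * ennreal (normal_density 0 \<bar>c\<bar> u) \<partial>lborel)"
proof -
  have "(\<integral>\<^sup>+u. G u * ennreal (normal_density 0 \<bar>c\<bar> u) \<partial>lborel) = ennreal \<bar>c\<bar> *
          (\<integral>\<^sup>+X. G (0 + c * X) * ennreal (normal_density 0 \<bar>c\<bar> (0 + c * X)) \<partial>lborel)"
    by (rule nn_integral_real_affine) (use assms in auto)
  also have "\<dots> = (\<integral>\<^sup>+X. G (c * X) * ennreal (\<bar>c\<bar> * normal_density 0 \<bar>c\<bar> (c * X)) \<partial>lborel)"
    by (simp add: nn_integral_cmult[symmetric] ennreal_mult' mult.left_commute)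
  finally show ?thesis
    using normal_density_scale[OF assms(1)] by simp
qed

lemma nn_integral_std_normal_affine:
  assumes "a \<noteq> 0" and [measurable]: "g \<in> borel_measurable borel"
  shows "(\<integral>\<^sup>+X. g (a * X + t) * ennreal (std_normal_density X) \<partial>lborel)
           = (\<integral>\<^sup>+z. g z * ennreal (normal_density 0 \<bar>a\<bar> (z - t)) \<partial>lborel)"
proof -
  have "(\<integral>\<^sup>+X. g (a * X + t) * ennreal (std_normal_density X) \<partial>lborel)
          = (\<integral>\<^sup>+u. g (u + t) * ennreal (normal_density 0 \<bar>a\<bar> u) \<partial>lborel)"
    by (rule nn_integral_std_normal_scale[OF assms(1), where G = "\<lambda>u. g (u + t)"]) simp
  also have "\<dots> = ennreal \<bar>1\<bar> * (\<integral>\<^sup>+z. g ((- t + 1 * z) + t)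
                    * ennreal (normal_density 0 \<bar>a\<bar> (- t + 1 * z)) \<partial>lborel)"
    by (rule nn_integral_real_affine) auto
  finally show ?thesis
    by simp
qed

lemma nn_integral_normal_density_convolution:
  assumes "a \<noteq> 0" "b \<noteq> 0"
  shows "(\<integral>\<^sup>+Y. ennreal (normal_density 0 \<bar>a\<bar> (z - b * Y) * std_normal_density Y) \<partial>lborel)
           = ennreal (normal_density 0 (sqrt (a\<^sup>2 + b\<^sup>2)) z)"
proof -
  have "(\<integral>\<^sup>+Y. ennreal (normal_density 0 \<bar>a\<bar> (z - b * Y)) * ennreal (std_normal_density Y) \<partial>lborel)
          = (\<integral>\<^sup>+w. ennreal (normal_density 0 \<bar>a\<bar> (z - w)) * ennreal (normal_density 0 \<bar>b\<bar> w) \<partial>lborel)"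
    by (rule nn_integral_std_normal_scale[OF assms(2)]) simp
  also have "\<dots> = ennreal (normal_density 0 (sqrt (\<bar>a\<bar>\<^sup>2 + \<bar>b\<bar>\<^sup>2)) z)"
    using fun_cong[OF conv_normal_density_zero_mean[of "\<bar>a\<bar>" "\<bar>b\<bar>"], of z] assms
    by (simp add: ennreal_mult')
  finally show ?thesis
    by (simp add: ennreal_mult')
qed

lemma nn_integral_std_normal_pair_lincomb_nonzero:
  assumes "a \<noteq> 0" "b \<noteq> 0" and [measurable]: "g \<in> borel_measurable borel"
  shows "(\<integral>\<^sup>+X. \<integral>\<^sup>+Y. g (a * X + b * Y) * ennreal (std_normal_density X * std_normal_density Y)
             \<partial>lborel \<partial>lborel)
           = (\<integral>\<^sup>+z. g z * ennreal (normal_density 0 (sqrt (a\<^sup>2 + b\<^sup>2)) z) \<partial>lborel)"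
proof -
  have inner: "(\<integral>\<^sup>+X. g (a * X + b * Y) * ennreal (std_normal_density X * std_normal_density Y) \<partial>lborel)
          = (\<integral>\<^sup>+z. g z * ennreal (normal_density 0 \<bar>a\<bar> (z - b * Y) * std_normal_density Y) \<partial>lborel)"
    for Y
  proof -
    have "(\<integral>\<^sup>+X. g (a * X + b * Y) * ennreal (std_normal_density X * std_normal_density Y) \<partial>lborel)
            = ennreal (std_normal_density Y)
                * (\<integral>\<^sup>+X. g (a * X + b * Y) * ennreal (std_normal_density X) \<partial>lborel)"
      by (subst nn_integral_cmult[symmetric]) (auto simp: ennreal_mult' ac_simps)
    also have "\<dots> = ennreal (std_normal_density Y)
                * (\<integral>\<^sup>+z. g z * ennreal (normal_density 0 \<bar>a\<bar> (z - b * Y)) \<partial>lborel)"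
      by (simp add: nn_integral_std_normal_affine[OF assms(1)])
    finally show ?thesis
      by (simp add: nn_integral_cmult[symmetric] ennreal_mult' ac_simps)
  qed
  have "(\<integral>\<^sup>+X. \<integral>\<^sup>+Y. g (a * X + b * Y) * ennreal (std_normal_density X * std_normal_density Y)
           \<partial>lborel \<partial>lborel)
          = (\<integral>\<^sup>+Y. \<integral>\<^sup>+z. g z * ennreal (normal_density 0 \<bar>a\<bar> (z - b * Y) * std_normal_density Y)
               \<partial>lborel \<partial>lborel)"
    by (subst lborel_pair.Fubini') (simp_all add: inner)
  also have "\<dots> = (\<integral>\<^sup>+z. g z * (\<integral>\<^sup>+Y. ennreal (normal_density 0 \<bar>a\<bar> (z - b * Y) * std_normal_density Y)
                      \<partial>lborel) \<partial>lborel)"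
    by (subst lborel_pair.Fubini') (simp_all add: nn_integral_cmult)
  finally show ?thesis
    by (simp add: nn_integral_normal_density_convolution[OF assms(1,2)])
qed

lemma nn_integral_std_normal_pair_scaled_fst:
  assumes "a \<noteq> 0" and [measurable]: "g \<in> borel_measurable borel"
  shows "(\<integral>\<^sup>+X. \<integral>\<^sup>+Y. g (a * X) * ennreal (std_normal_density X * std_normal_density Y)
             \<partial>lborel \<partial>lborel)
           = (\<integral>\<^sup>+z. g z * ennreal (normal_density 0 \<bar>a\<bar> z) \<partial>lborel)"
proof -
  have "(\<integral>\<^sup>+Y. g (a * X) * ennreal (std_normal_density X * std_normal_density Y) \<partial>lborel)
          = g (a * X) * ennreal (std_normal_density X)" for X
    by (simp add: nn_integral_cmult ennreal_mult' mult.assoc nn_integral_eq_integral)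
  then show ?thesis
    by (simp add: nn_integral_std_normal_scale[OF assms(1)])
qed

lemma nn_integral_std_normal_pair_lincomb:
  assumes "a \<noteq> 0 \<or> b \<noteq> 0" and [measurable]: "g \<in> borel_measurable borel"
  shows "(\<integral>\<^sup>+X. \<integral>\<^sup>+Y. g (a * X + b * Y) * ennreal (std_normal_density X * std_normal_density Y)
             \<partial>lborel \<partial>lborel)
           = (\<integral>\<^sup>+z. g z * ennreal (normal_density 0 (sqrt (a\<^sup>2 + b\<^sup>2)) z) \<partial>lborel)"
proof -
  consider "a \<noteq> 0" "b \<noteq> 0" | "b = 0" "a \<noteq> 0" | "a = 0" "b \<noteq> 0"
    using assms(1) by blast
  then show ?thesis
  proof cases
    case 1
    then show ?thesis
      by (rule nn_integral_std_normal_pair_lincomb_nonzero) simp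
  next
    case 2
    then show ?thesis
      using nn_integral_std_normal_pair_scaled_fst[of a g] by simp
  next
    case 3
    have "(\<integral>\<^sup>+X. \<integral>\<^sup>+Y. g (a * X + b * Y) * ennreal (std_normal_density X * std_normal_density Y)
             \<partial>lborel \<partial>lborel)
            = (\<integral>\<^sup>+Y. \<integral>\<^sup>+X. g (b * Y) * ennreal (std_normal_density Y * std_normal_density X)
                 \<partial>lborel \<partial>lborel)"
      using 3 by (subst lborel_pair.Fubini') (simp_all add: mult.commute)
    also have "\<dots> = (\<integral>\<^sup>+z. g z * ennreal (normal_density 0 \<bar>b\<bar> z) \<partial>lborel)"
      using 3 by (intro nn_integral_std_normal_pair_scaled_fst) simp_all
    finally show ?thesis
      using 3 by simp
  qed
qed

text \<open>The standard deviation of \<open>\<alpha> \<xi> + \<beta> \<eta>\<close>.\<close>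

definition bvn_sd_lincomb :: "real \<Rightarrow> real \<Rightarrow> real \<Rightarrow> real \<Rightarrow> real \<Rightarrow> real" where
  "bvn_sd_lincomb sx sy r \<alpha> \<beta> = sqrt (\<alpha>\<^sup>2 * sx\<^sup>2 + 2 * r * \<alpha> * \<beta> * sx * sy + \<beta>\<^sup>2 * sy\<^sup>2)"

lemma bvn_variance_lincomb_pos:
  fixes sx sy r \<alpha> \<beta> :: real
  assumes "0 < sx" "0 < sy" "r\<^sup>2 < 1" "\<alpha> \<noteq> 0 \<or> \<beta> \<noteq> 0"
  shows "0 < \<alpha>\<^sup>2 * sx\<^sup>2 + 2 * r * \<alpha> * \<beta> * sx * sy + \<beta>\<^sup>2 * sy\<^sup>2"
proof -
  have "\<alpha>\<^sup>2 * sx\<^sup>2 + 2 * r * \<alpha> * \<beta> * sx * sy + \<beta>\<^sup>2 * sy\<^sup>2 = (\<alpha> * sx + r * \<beta> * sy)\<^sup>2 + (1 - r\<^sup>2) * (\<beta> * sy)\<^sup>2"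
    by algebra
  moreover have "0 < (\<alpha> * sx + r * \<beta> * sy)\<^sup>2 + (1 - r\<^sup>2) * (\<beta> * sy)\<^sup>2"
  proof (cases "\<beta> = 0")
    case True
    then show ?thesis
      using assms by simp
  next
    case False
    then have "0 < (1 - r\<^sup>2) * (\<beta> * sy)\<^sup>2"
      using assms by simp
    then show ?thesis
      by (simp add: add_nonneg_pos)
  qed
  ultimately show ?thesis
    by simp
qed

lemma bvn_sd_lincomb_pos:
  assumes "0 < sx" "0 < sy" "r\<^sup>2 < 1" "\<alpha> \<noteq> 0 \<or> \<beta> \<noteq> 0"
  shows "0 < bvn_sd_lincomb sx sy r \<alpha> \<beta>"
  using bvn_variance_lincomb_pos[OF assms] by (simp add: bvn_sd_lincomb_def)

lemma measure_bvn_halfplane: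
  assumes "0 < sx" "0 < sy" "r\<^sup>2 < 1" "\<alpha> \<noteq> 0 \<or> \<beta> \<noteq> 0"
  shows "measure (bvn sx sy r) {p. d < \<alpha> * fst p + \<beta> * snd p}
           = normal_tail (d / bvn_sd_lincomb sx sy r \<alpha> \<beta>)"
proof -
  define H where "H = {p :: real \<times> real. d < \<alpha> * fst p + \<beta> * snd p}"
  define s where "s = sqrt (1 - r\<^sup>2)"
  define a where "a = \<alpha> * sx + \<beta> * sy * r"
  define b where "b = \<beta> * sy * s"
  define \<tau> where "\<tau> = bvn_sd_lincomb sx sy r \<alpha> \<beta>"
  have s: "0 < s" "s\<^sup>2 = 1 - r\<^sup>2"
    using assms(3) by (simp_all add: s_def)
  have \<tau>: "0 < \<tau>"
    unfolding \<tau>_def by (rule bvn_sd_lincomb_pos[OF assms])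
  have [measurable]: "H \<in> sets borel"
    unfolding H_def by (intro borel_open open_Collect_less continuous_intros)
  have ab: "a \<noteq> 0 \<or> b \<noteq> 0"
    using assms s by (cases "\<beta> = 0") (auto simp: a_def b_def)
  have "a\<^sup>2 + b\<^sup>2 = \<alpha>\<^sup>2 * sx\<^sup>2 + 2 * r * \<alpha> * \<beta> * sx * sy + \<beta>\<^sup>2 * sy\<^sup>2"
    unfolding a_def b_def using s(2) by algebra
  then have sd: "sqrt (a\<^sup>2 + b\<^sup>2) = \<tau>"
    by (simp add: \<tau>_def bvn_sd_lincomb_def)
  have "emeasure (bvn sx sy r) H = (\<integral>\<^sup>+p. indicator H p * ennreal (bvn_pdf sx sy r p) \<partial>lborel)"
    unfolding bvn_def by (subst emeasure_density) (auto simp: mult.commute)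
  also have "\<dots> = (\<integral>\<^sup>+X. \<integral>\<^sup>+Y. indicator H (sx * X, sy * (r * X + s * Y))
                   * ennreal (std_normal_density X * std_normal_density Y) \<partial>lborel \<partial>lborel)"
    unfolding s_def by (rule nn_integral_bvn_pdf[OF assms(1-3)]) simp
  also have "\<dots> = (\<integral>\<^sup>+X. \<integral>\<^sup>+Y. indicator {d<..} (a * X + b * Y)
                   * ennreal (std_normal_density X * std_normal_density Y) \<partial>lborel \<partial>lborel)"
  proof -
    have "\<alpha> * (sx * X) + \<beta> * (sy * (r * X + s * Y)) = a * X + b * Y" for X Y
      unfolding a_def b_def by algebra
    then show ?thesis
      by (simp add: H_def indicator_def)
  qed
  also have "\<dots> = (\<integral>\<^sup>+z. indicator {d<..} z * ennreal (normal_density 0 \<tau> z) \<partial>lborel)"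
    using nn_integral_std_normal_pair_lincomb[OF ab, of "indicator {d<..}"] sd by simp
  also have "\<dots> = (\<integral>\<^sup>+X. indicator {d<..} (\<tau> * X) * ennreal (std_normal_density X) \<partial>lborel)"
    using nn_integral_std_normal_scale[of \<tau> "indicator {d<..}"] \<tau> by simp
  also have "\<dots> = (\<integral>\<^sup>+X. indicator {d / \<tau><..} X * ennreal (std_normal_density X) \<partial>lborel)"
    using \<tau> by (intro nn_integral_cong) (simp add: indicator_def divide_less_eq mult.commute)
  also have "\<dots> = ennreal (normal_tail (d / \<tau>))"
    by (simp add: emeasure_std_normal emeasure_std_normal_greaterThan[symmetric])
  finally show ?thesis
    unfolding H_def[symmetric] \<tau>_def[symmetric] measure_def
    by (simp add: normal_tail_nonneg)
qed

section \<open>Voronoi cells and the payoff\<close>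

lemma bvn_sd_lincomb_uminus: "bvn_sd_lincomb sx sy r (- \<alpha>) (- \<beta>) = bvn_sd_lincomb sx sy r \<alpha> \<beta>"
  by (simp add: bvn_sd_lincomb_def)

lemma bvn_variance_lincomb_nonneg:
  fixes sx sy r \<alpha> \<beta> :: real
  assumes "r\<^sup>2 \<le> 1"
  shows "0 \<le> \<alpha>\<^sup>2 * sx\<^sup>2 + 2 * r * \<alpha> * \<beta> * sx * sy + \<beta>\<^sup>2 * sy\<^sup>2"
proof -
  have "\<alpha>\<^sup>2 * sx\<^sup>2 + 2 * r * \<alpha> * \<beta> * sx * sy + \<beta>\<^sup>2 * sy\<^sup>2 = (\<alpha> * sx + r * \<beta> * sy)\<^sup>2 + (1 - r\<^sup>2) * (\<beta> * sy)\<^sup>2"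
    by algebra
  also have "0 \<le> \<dots>"
    using assms by (intro add_nonneg_nonneg mult_nonneg_nonneg) auto
  finally show ?thesis .
qed

lemma bvn_sd_lincomb_nonneg: "r\<^sup>2 \<le> 1 \<Longrightarrow> 0 \<le> bvn_sd_lincomb sx sy r \<alpha> \<beta>"
  by (simp add: bvn_sd_lincomb_def bvn_variance_lincomb_nonneg)

lemma bvn_sd_lincomb_squared:
  "r\<^sup>2 \<le> 1 \<Longrightarrow>
     (bvn_sd_lincomb sx sy r \<alpha> \<beta>)\<^sup>2 = \<alpha>\<^sup>2 * sx\<^sup>2 + 2 * r * \<alpha> * \<beta> * sx * sy + \<beta>\<^sup>2 * sy\<^sup>2"
  by (simp add: bvn_sd_lincomb_def bvn_variance_lincomb_nonneg)

lemma xstar_eq: "xstar sx sy r = sqrt (pi / 2) * bvn_sd_lincomb sx sy r 1 1 / 2"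
proof -
  have "sqrt (2 * pi) = 2 * sqrt (pi / 2)"
    using real_sqrt_mult[of 4 "pi / 2"] by simp
  then show ?thesis
    by (simp add: xstar_def bvn_sd_lincomb_def real_sqrt_mult)
qed

lemma cellC1_eq_cellC2: "cellC1 a b = cellC2 b a"
  by (auto simp: cellC1_def cellC2_def)

lemma cellC2_eq_halfplane:
  "cellC2 a b = {p. (fst b)\<^sup>2 + (snd b)\<^sup>2 - (fst a)\<^sup>2 - (snd a)\<^sup>2
                      < 2 * (fst b - fst a) * fst p + 2 * (snd b - snd a) * snd p}"
  by (auto simp: cellC2_def power2_eq_square algebra_simps)

lemma payoffK_eq_normal_tail:
  assumes "0 < sx" "0 < sy" "r\<^sup>2 < 1" "a \<noteq> b"
  shows "payoffK sx sy r a b = (fst a + snd a) + ((fst b + snd b) - (fst a + snd a))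
           * normal_tail (((fst b)\<^sup>2 + (snd b)\<^sup>2 - (fst a)\<^sup>2 - (snd a)\<^sup>2)
                          / bvn_sd_lincomb sx sy r (2 * (fst b - fst a)) (2 * (snd b - snd a)))"
proof -
  define \<alpha> where "\<alpha> = 2 * (fst b - fst a)"
  define \<beta> where "\<beta> = 2 * (snd b - snd a)"
  define D where "D = (fst b)\<^sup>2 + (snd b)\<^sup>2 - (fst a)\<^sup>2 - (snd a)\<^sup>2"
  define q where "q = normal_tail (D / bvn_sd_lincomb sx sy r \<alpha> \<beta>)"
  have \<alpha>\<beta>: "\<alpha> \<noteq> 0 \<or> \<beta> \<noteq> 0" "- \<alpha> \<noteq> 0 \<or> - \<beta> \<noteq> 0"
    using assms(4) by (auto simp: \<alpha>_def \<beta>_def prod_eq_iff)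
  have "measure (bvn sx sy r) (cellC2 a b) = q"
    unfolding cellC2_eq_halfplane q_def \<alpha>_def \<beta>_def D_def
    by (rule measure_bvn_halfplane[OF assms(1-3) \<alpha>\<beta>(1)[unfolded \<alpha>_def \<beta>_def]])
  moreover have "measure (bvn sx sy r) (cellC1 a b) = 1 - q"
  proof -
    have swap: "2 * (fst a - fst b) = - \<alpha>" "2 * (snd a - snd b) = - \<beta>"
               "(fst a)\<^sup>2 + (snd a)\<^sup>2 - (fst b)\<^sup>2 - (snd b)\<^sup>2 = - D"
      by (simp_all add: \<alpha>_def \<beta>_def D_def)
    have "measure (bvn sx sy r) (cellC1 a b) = normal_tail (- D / bvn_sd_lincomb sx sy r (- \<alpha>) (- \<beta>))"
      unfolding cellC1_eq_cellC2 cellC2_eq_halfplane swap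
      by (rule measure_bvn_halfplane[OF assms(1-3) \<alpha>\<beta>(2)])
    then show ?thesis
      by (simp add: bvn_sd_lincomb_uminus q_def normal_tail_uminus[symmetric])
  qed
  ultimately have "payoffK sx sy r a b = (fst a + snd a) * (1 - q) + (fst b + snd b) * q"
    using assms(4) by (simp add: payoffK_def)
  then show ?thesis
    unfolding q_def \<alpha>_def \<beta>_def D_def by (simp add: algebra_simps)
qed

lemma payoffK_swap: "payoffK sx sy r b a = payoffK sx sy r a b"
  by (simp add: payoffK_def cellC1_eq_cellC2 add.commute eq_commute[of a b])

lemma payoffK_uminus:
  assumes "0 < sx" "0 < sy" "r\<^sup>2 < 1"
  shows "payoffK sx sy r (- a) (- b) = - payoffK sx sy r a b"
proof (cases "a = b")
  case True
  then show ?thesis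
    by (simp add: payoffK_def)
next
  case False
  define \<alpha> where "\<alpha> = 2 * (fst b - fst a)"
  define \<beta> where "\<beta> = 2 * (snd b - snd a)"
  define D where "D = (fst b)\<^sup>2 + (snd b)\<^sup>2 - (fst a)\<^sup>2 - (snd a)\<^sup>2"
  have swap: "2 * (fst (- b) - fst (- a)) = - \<alpha>" "2 * (snd (- b) - snd (- a)) = - \<beta>"
             "(fst (- b))\<^sup>2 + (snd (- b))\<^sup>2 - (fst (- a))\<^sup>2 - (snd (- a))\<^sup>2 = D"
    by (simp_all add: \<alpha>_def \<beta>_def D_def)
  have "- a \<noteq> - b"
    using False by simp
  from payoffK_eq_normal_tail[OF assms this] payoffK_eq_normal_tail[OF assms False]
  show ?thesis
    unfolding swap \<alpha>_def[symmetric] \<beta>_def[symmetric] D_def[symmetric] bvn_sd_lincomb_uminus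
    by (simp add: algebra_simps)
qed

section \<open>The equilibrium\<close>

lemma normal_tail_linear_bound:
  assumes "0 \<le> m" "\<tau> * z \<le> m * z"
  shows "(\<tau> * z + m * sqrt (pi / 2)) * normal_tail z \<le> m * sqrt (pi / 2) / 2"
proof -
  have "(\<tau> * z + m * sqrt (pi / 2)) * normal_tail z \<le> m * ((z + sqrt (pi / 2)) * normal_tail z)"
    using mult_right_mono[OF assms(2) normal_tail_nonneg] by (simp add: algebra_simps)
  also have "\<dots> \<le> m * (sqrt (pi / 2) / 2)"
    by (rule mult_left_mono[OF normal_tail_hyperbola_bound assms(1)])
  finally show ?thesis
    by simp
qed

lemma equal_variance_majorant:
  fixes \<sigma> r \<alpha> \<beta> z :: real
  assumes "0 \<le> r" "r < 1" "0 < \<alpha> + \<beta>"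
  obtains m where "0 \<le> m" "bvn_sd_lincomb \<sigma> \<sigma> r \<alpha> \<beta> * z \<le> m * z"
    "bvn_sd_lincomb \<sigma> \<sigma> r 1 1 * (\<alpha> + \<beta>) \<le> 2 * m"
    "(\<alpha> + \<beta>) * m \<le> bvn_sd_lincomb \<sigma> \<sigma> r 1 1 * (\<alpha>\<^sup>2 + \<beta>\<^sup>2)"
proof -
  define \<tau> where "\<tau> = bvn_sd_lincomb \<sigma> \<sigma> r \<alpha> \<beta>"
  define w where "w = bvn_sd_lincomb \<sigma> \<sigma> r 1 1"
  define S where "S = \<alpha> + \<beta>"
  define N where "N = \<alpha>\<^sup>2 + \<beta>\<^sup>2"
  have r: "r\<^sup>2 \<le> 1"
    using assms(1,2) by (simp add: abs_square_le_1)
  have \<tau>: "0 \<le> \<tau>" "\<tau>\<^sup>2 = \<sigma>\<^sup>2 * (\<alpha>\<^sup>2 + 2 * r * \<alpha> * \<beta> + \<beta>\<^sup>2)"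
    unfolding \<tau>_def using bvn_sd_lincomb_nonneg[OF r] bvn_sd_lincomb_squared[OF r, of \<sigma> \<sigma> \<alpha> \<beta>]
    by (auto simp: power2_eq_square algebra_simps)
  have w: "0 \<le> w" "w\<^sup>2 = 2 * \<sigma>\<^sup>2 * (1 + r)"
    unfolding w_def using bvn_sd_lincomb_nonneg[OF r] bvn_sd_lincomb_squared[OF r, of \<sigma> \<sigma> 1 1]
    by (auto simp: power2_eq_square algebra_simps)
  have S: "S\<^sup>2 \<le> 2 * N"
  proof -
    have "2 * N - S\<^sup>2 = (\<alpha> - \<beta>)\<^sup>2"
      unfolding N_def S_def by algebra
    then show ?thesis
      by (metis diff_ge_0_iff_ge zero_le_power2)
  qed
  show ?thesis
  proof (cases "0 \<le> z")
    case True
    define n where "n = sqrt (2 * N)"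
    have "0 \<le> N"
      by (simp add: N_def)
    then have n: "0 \<le> n" "n\<^sup>2 = 2 * N" "S \<le> n"
      using S by (simp_all add: n_def real_le_rsqrt)
    show ?thesis
    proof (rule that[of "w * n / 2", folded \<tau>_def w_def S_def N_def])
      show "0 \<le> w * n / 2"
        using w(1) n(1) by simp
      \<comment> \<open>the variance of \<open>\<alpha> \<xi> + \<beta> \<eta>\<close> is at most \<open>(1 + r) \<sigma>\<^sup>2 (\<alpha>\<^sup>2 + \<beta>\<^sup>2)\<close> because \<open>r \<ge> 0\<close>\<close>
      have "(w * n)\<^sup>2 - (2 * \<tau>)\<^sup>2 = 4 * \<sigma>\<^sup>2 * r * (\<alpha> - \<beta>)\<^sup>2"
        unfolding power_mult_distrib w(2) n(2) \<tau>(2) N_def by algebra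
      moreover have "0 \<le> 4 * \<sigma>\<^sup>2 * r * (\<alpha> - \<beta>)\<^sup>2"
        using assms(1) by simp
      ultimately have "(2 * \<tau>)\<^sup>2 \<le> (w * n)\<^sup>2"
        by linarith
      then have "2 * \<tau> \<le> w * n"
        by (rule power2_le_imp_le) (use w(1) n(1) in simp)
      then have "\<tau> \<le> w * n / 2"
        by simp
      then show "\<tau> * z \<le> w * n / 2 * z"
        using True by (rule mult_right_mono)
      show "w * S \<le> 2 * (w * n / 2)"
        using mult_left_mono[OF n(3) w(1)] by simp
      have "S * (w * n / 2) \<le> n * (w * n / 2)"
        using n(1,3) w(1) by (intro mult_right_mono) auto
      also have "\<dots> = w * N"
        using n(2) by (simp add: power2_eq_square)
      finally show "S * (w * n / 2) \<le> w * N" .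
    qed
  next
    case False
    show ?thesis
    proof (rule that[of "w * S / 2", folded \<tau>_def w_def S_def N_def])
      show "0 \<le> w * S / 2"
        using w(1) assms(3) by (simp add: S_def)
      \<comment> \<open>and at least \<open>(1 + r) \<sigma>\<^sup>2 (\<alpha> + \<beta>)\<^sup>2 / 2\<close> because \<open>r \<le> 1\<close>\<close>
      have "(2 * \<tau>)\<^sup>2 - (w * S)\<^sup>2 = 2 * \<sigma>\<^sup>2 * (1 - r) * (\<alpha> - \<beta>)\<^sup>2"
        unfolding power_mult_distrib w(2) \<tau>(2) S_def by algebra
      moreover have "0 \<le> 2 * \<sigma>\<^sup>2 * (1 - r) * (\<alpha> - \<beta>)\<^sup>2"
        using assms(2) by simp
      ultimately have "(w * S)\<^sup>2 \<le> (2 * \<tau>)\<^sup>2"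
        by linarith
      then have "w * S \<le> 2 * \<tau>"
        by (rule power2_le_imp_le) (use \<tau>(1) in simp)
      then have "w * S / 2 \<le> \<tau>"
        by simp
      then show "\<tau> * z \<le> w * S / 2 * z"
        using False by (intro mult_right_mono_neg) auto
      show "w * S \<le> 2 * (w * S / 2)"
        by simp
      show "S * (w * S / 2) \<le> w * N"
        using mult_left_mono[OF S w(1)] by (simp add: power2_eq_square algebra_simps)
    qed
  qed
qed

lemma equal_variance_tail_bound:
  fixes \<sigma> r \<alpha> \<beta> :: real
  assumes "0 < \<sigma>" "0 \<le> r" "r < 1" "\<alpha> \<noteq> 0 \<or> \<beta> \<noteq> 0"
  defines "c \<equiv> sqrt (pi / 2) * bvn_sd_lincomb \<sigma> \<sigma> r 1 1 / 2"
  shows "(\<alpha> + \<beta>) * normal_tail (((\<alpha>\<^sup>2 + \<beta>\<^sup>2) / 4 - c * (\<alpha> + \<beta>)) / bvn_sd_lincomb \<sigma> \<sigma> r \<alpha> \<beta>)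
           \<le> 4 * c"
proof -
  define k where "k = sqrt (pi / 2)"
  define \<tau> where "\<tau> = bvn_sd_lincomb \<sigma> \<sigma> r \<alpha> \<beta>"
  define w where "w = bvn_sd_lincomb \<sigma> \<sigma> r 1 1"
  define S where "S = \<alpha> + \<beta>"
  define N where "N = \<alpha>\<^sup>2 + \<beta>\<^sup>2"
  define z where "z = (N / 4 - c * S) / \<tau>"
  have r: "r\<^sup>2 < 1"
    using assms(2,3) by (simp add: abs_square_less_1)
  have \<tau>: "0 < \<tau>"
    unfolding \<tau>_def using assms(1,4) r by (intro bvn_sd_lincomb_pos) simp_all
  have k: "0 < k"
    by (simp add: k_def)
  have c: "c = k * w / 2" "0 \<le> c"
    using bvn_sd_lincomb_nonneg[of r \<sigma> \<sigma> 1 1] r k by (simp_all add: c_def k_def w_def)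
  have N: "0 < N"
    using assms(4) by (simp add: N_def sum_power2_gt_zero_iff)
  have "S * normal_tail z \<le> 4 * c"
  proof (cases "S \<le> 0")
    case True
    then have "S * normal_tail z \<le> 0"
      by (intro mult_nonpos_nonneg normal_tail_nonneg)
    then show ?thesis
      using c(2) by linarith
  next
    case False
    then obtain m where m: "0 \<le> m" "\<tau> * z \<le> m * z" "w * S \<le> 2 * m" "S * m \<le> w * N"
      using equal_variance_majorant[OF assms(2,3), of \<alpha> \<beta> \<sigma> z]
      unfolding \<tau>_def[symmetric] w_def[symmetric] S_def[symmetric] N_def[symmetric] by auto
    have "\<tau> * z = N / 4 - c * S"
      using \<tau> by (simp add: z_def)
    then have "S * normal_tail z * (N / 4) = S * ((\<tau> * z + c * S) * normal_tail z)"
      by (simp add: ac_simps)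
    also have "\<dots> \<le> S * ((\<tau> * z + m * k) * normal_tail z)"
      using m(3) k False normal_tail_nonneg[of z]
      by (intro mult_left_mono mult_right_mono) (auto simp: c(1) mult.commute)
    also have "\<dots> \<le> S * (m * k / 2)"
      using normal_tail_linear_bound[OF m(1,2)] False by (intro mult_left_mono) (simp_all add: k_def)
    also have "\<dots> \<le> w * N * k / 2"
      using m(4) k by (simp add: mult.assoc[symmetric])
    also have "\<dots> = 4 * c * (N / 4)"
      by (simp add: c(1))
    finally show ?thesis
      using N by simp
  qed
  then show ?thesis
    by (simp only: S_def N_def z_def \<tau>_def)
qed

lemma payoffK_xstar_le_0:
  assumes "0 < \<sigma>" "0 \<le> r" "r < 1"
  shows "payoffK \<sigma> \<sigma> r (- xstar \<sigma> \<sigma> r, - xstar \<sigma> \<sigma> r) b \<le> 0"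
proof -
  define c where "c = xstar \<sigma> \<sigma> r"
  have r: "r\<^sup>2 < 1"
    using assms(2,3) by (simp add: abs_square_less_1)
  have c: "c = sqrt (pi / 2) * bvn_sd_lincomb \<sigma> \<sigma> r 1 1 / 2" "0 \<le> c"
    using bvn_sd_lincomb_nonneg[of r \<sigma> \<sigma> 1 1] r by (simp_all add: c_def xstar_eq)
  show ?thesis
  proof (cases "b = (- c, - c)")
    case True
    then show ?thesis
      using c(2) by (simp add: payoffK_def c_def)
  next
    case False
    define \<alpha> where "\<alpha> = 2 * (fst b + c)"
    define \<beta> where "\<beta> = 2 * (snd b + c)"
    have \<alpha>\<beta>: "\<alpha> \<noteq> 0 \<or> \<beta> \<noteq> 0"
      using False by (auto simp: \<alpha>_def \<beta>_def prod_eq_iff)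
    have "(- c, - c) \<noteq> b"
      using False by auto
    moreover have "2 * (fst b - fst (- c, - c)) = \<alpha>" "2 * (snd b - snd (- c, - c)) = \<beta>"
      "(fst b)\<^sup>2 + (snd b)\<^sup>2 - (fst (- c, - c))\<^sup>2 - (snd (- c, - c))\<^sup>2
         = (\<alpha>\<^sup>2 + \<beta>\<^sup>2) / 4 - c * (\<alpha> + \<beta>)"
      "fst (- c, - c) + snd (- c, - c) = - 2 * c"
      "fst b + snd b - (fst (- c, - c) + snd (- c, - c)) = (\<alpha> + \<beta>) / 2"
      by (simp_all add: \<alpha>_def \<beta>_def power2_eq_square field_simps)
    ultimately have "payoffK \<sigma> \<sigma> r (- c, - c) b = - 2 * c + (\<alpha> + \<beta>)
            * normal_tail (((\<alpha>\<^sup>2 + \<beta>\<^sup>2) / 4 - c * (\<alpha> + \<beta>)) / bvn_sd_lincomb \<sigma> \<sigma> r \<alpha> \<beta>) / 2"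
      using payoffK_eq_normal_tail[OF assms(1,1) r] by simp
    also have "\<dots> \<le> - 2 * c + 4 * c / 2"
      using equal_variance_tail_bound[OF assms \<alpha>\<beta>] unfolding c(1)[symmetric] by simp
    finally show ?thesis
      by (simp add: c_def)
  qed
qed

lemma payoffK_xstar_eq_0:
  assumes "0 < \<sigma>" "r\<^sup>2 < 1"
  shows "payoffK \<sigma> \<sigma> r (- xstar \<sigma> \<sigma> r, - xstar \<sigma> \<sigma> r) (xstar \<sigma> \<sigma> r, xstar \<sigma> \<sigma> r) = 0"
proof -
  define c where "c = xstar \<sigma> \<sigma> r"
  have "0 < c"
    using bvn_sd_lincomb_pos[of \<sigma> \<sigma> r 1 1] assms by (simp add: c_def xstar_eq)
  then have "(- c, - c) \<noteq> (c, c)"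
    by simp
  from payoffK_eq_normal_tail[OF assms(1,1,2) this]
  show ?thesis
    by (simp add: c_def normal_tail_0)
qed

theorem mainTheorem8:
  fixes sx sy r :: real
  assumes "sx > 0" and "sy > 0" and "sx = sy" and "0 < r" and "r < 1"
  shows "(\<forall>a b :: real \<times> real.
            payoffK sx sy r (- xstar sx sy r, - xstar sx sy r) b
              \<le> payoffK sx sy r (- xstar sx sy r, - xstar sx sy r) (xstar sx sy r, xstar sx sy r)
          \<and> payoffK sx sy r (- xstar sx sy r, - xstar sx sy r) (xstar sx sy r, xstar sx sy r) = 0
          \<and> 0 \<le> payoffK sx sy r a (xstar sx sy r, xstar sx sy r))"
proof -
  define c where "c = xstar sx sx r"
  have r: "0 \<le> r" "r\<^sup>2 < 1"
    using assms(4,5) by (simp_all add: abs_square_less_1)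
  have equilibrium_value: "payoffK sx sx r (- c, - c) (c, c) = 0"
    unfolding c_def by (rule payoffK_xstar_eq_0[OF assms(1) r(2)])
  have maximiser: "payoffK sx sx r (- c, - c) b \<le> 0" for b
    unfolding c_def by (rule payoffK_xstar_le_0[OF assms(1) r(1) assms(5)])
  have minimiser: "0 \<le> payoffK sx sx r a (c, c)" for a
    using maximiser[of "- a"] payoffK_uminus[OF assms(1,1) r(2), of "(c, c)" a]
    by (simp add: payoffK_swap[of sx sx r a])
  show ?thesis
    using equilibrium_value maximiser minimiser unfolding assms(3)[symmetric] c_def by simp
qed

end
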